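(* Let $(\xi_n)_{n\in\mathbb{Z}}$ be a stationary Markov chain with invariant distribution $\pi$, let $f\in\mathbb{L}_0^2(\pi)$, $X_i=f(\xi_i)$, $S_n=\sum_{i=1}^nX_i$ (with $S_0=0$). Then each of the sequences $(\|E(S_n\mid\xi_0)\|)_{n\ge0}$, $(\|E(S_n\mid\xi_n)\|)_{n\ge0}$ and $(\|E(S_n\mid\xi_0,\xi_n)\|)_{n\ge0}$ is subadditive, i.e. a sequence $(b_n)$ of the form listed satisfies $b_{n+m}\le b_n+b_m$ for all $n,m$.
   Context: The chain is defined on a probability space $(\Omega,\mathcal{F},\mathbb{P})$ with values in a measurable space $(S,\mathcal{A})$ and $\pi(A)=\mathbb{P}(\xi_0\in A)$. $\mathbb{L}_0^2(\pi)$ is the set of measurable $f$ with $\int f^2d\pi<\infty$ and $\int f d\pi=0$. $\|\cdot\|$ is the norm in $\mathbb{L}^2(\mathbb{P})$. *)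

theory Defs
  imports "HOL-Probability.Probability"
begin

definition gen_sigma :: "'a measure \<Rightarrow> 's measure \<Rightarrow> (int \<Rightarrow> 'a \<Rightarrow> 's) \<Rightarrow> int set \<Rightarrow> 'a measure" where
  "gen_sigma M S xi K =
     sigma (space M) (\<Union>k\<in>K. {xi k -` A \<inter> space M | A. A \<in> sets S})"

definition stationary_process :: "'a measure \<Rightarrow> 's measure \<Rightarrow> (int \<Rightarrow> 'a \<Rightarrow> 's) \<Rightarrow> bool" where
  "stationary_process M S xi \<longleftrightarrow>
     (\<forall>I k. finite I \<longrightarrow>
        distr M (Pi\<^sub>M I (\<lambda>_. S)) (\<lambda>\<omega>. \<lambda>i\<in>I. xi (i + k) \<omega>) =
        distr M (Pi\<^sub>M I (\<lambda>_. S)) (\<lambda>\<omega>. \<lambda>i\<in>I. xi i \<omega>))"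

definition markov_process :: "'a measure \<Rightarrow> 's measure \<Rightarrow> (int \<Rightarrow> 'a \<Rightarrow> 's) \<Rightarrow> bool" where
  "markov_process M S xi \<longleftrightarrow>
     (\<forall>n. \<forall>A\<in>sets S.
        AE \<omega> in M. real_cond_exp M (gen_sigma M S xi {..n}) (indicator (xi (n + 1) -` A \<inter> space M)) \<omega>
                 = real_cond_exp M (gen_sigma M S xi {n}) (indicator (xi (n + 1) -` A \<inter> space M)) \<omega>)"

definition stationary_markov_chain :: "'a measure \<Rightarrow> 's measure \<Rightarrow> (int \<Rightarrow> 'a \<Rightarrow> 's) \<Rightarrow> bool" where
  "stationary_markov_chain M S xi \<longleftrightarrow>
     prob_space M \<and> (\<forall>i. xi i \<in> measurable M S) \<and>
     stationary_process M S xi \<and> markov_process M S xi"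

definition L2_0 :: "'s measure \<Rightarrow> ('s \<Rightarrow> real) set" where
  "L2_0 \<pi> = {f. f \<in> borel_measurable \<pi> \<and> integrable \<pi> (\<lambda>x. (f x)\<^sup>2) \<and> integrable \<pi> f \<and> (\<integral>x. f x \<partial>\<pi>) = 0}"

definition L2norm :: "'a measure \<Rightarrow> ('a \<Rightarrow> real) \<Rightarrow> real" where
  "L2norm M Y = sqrt (\<integral>\<omega>. (Y \<omega>)\<^sup>2 \<partial>M)"

end

theory Submission
  imports Defs
begin

(* Write S(n+m) = S(n) + T with T = X(n+1) + ... + X(n+m). Conditional expectation is linear and
   Minkowski's inequality holds in L2, so each norm splits into a term for S(n) and one for T.
   Conditioning on more can only increase the L2 norm of a conditional expectation, and by the
   Markov property the past (xi(k))_{k <= n} and any future block (xi(n),...,xi(n+k)) are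
   conditionally independent given xi(n). Hence, e.g.,
   ||E(T | xi 0)|| <= ||E(T | xi 0, xi n)|| = ||E(T | xi n)||  and
   ||E(S n | xi (n+m))|| <= ||E(S n | xi n, xi (n+m))|| = ||E(S n | xi n)||.
   Finally T and xi(n + j) are the same functionals of the path shifted by n as S(m) and xi(j) are
   of the unshifted one, so by stationarity ||E(T | xi n)|| = ||E(S m | xi 0)||, and likewise for
   the other conditionings. *)

section \<open>L2 estimates for conditional expectations\<close>

lemma integrable_mult_of_square_integrable:
  fixes X Y :: "'a \<Rightarrow> real"
  assumes [measurable]: "X \<in> borel_measurable M" "Y \<in> borel_measurable M"
    and "integrable M (\<lambda>x. (X x)\<^sup>2)" "integrable M (\<lambda>x. (Y x)\<^sup>2)"
  shows "integrable M (\<lambda>x. X x * Y x)"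
proof (rule Bochner_Integration.integrable_bound)
  show "integrable M (\<lambda>x. (X x)\<^sup>2 + (Y x)\<^sup>2)"
    using assms by simp
  have "\<bar>X x * Y x\<bar> \<le> 2 * \<bar>X x\<bar> * \<bar>Y x\<bar>" for x
    by (simp add: abs_mult)
  also have "2 * \<bar>X x\<bar> * \<bar>Y x\<bar> \<le> (X x)\<^sup>2 + (Y x)\<^sup>2" for x
    using sum_squares_bound[of "\<bar>X x\<bar>" "\<bar>Y x\<bar>"] by simp
  finally have "\<bar>X x * Y x\<bar> \<le> (X x)\<^sup>2 + (Y x)\<^sup>2" for x .
  then show "AE x in M. norm (X x * Y x) \<le> norm ((X x)\<^sup>2 + (Y x)\<^sup>2)"
    by simp
qed simp

lemma integrable_square_add:
  fixes X Y :: "'a \<Rightarrow> real"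
  assumes [measurable]: "X \<in> borel_measurable M" "Y \<in> borel_measurable M"
    and "integrable M (\<lambda>x. (X x)\<^sup>2)" "integrable M (\<lambda>x. (Y x)\<^sup>2)"
  shows "integrable M (\<lambda>x. (X x + Y x)\<^sup>2)"
  using assms integrable_mult_of_square_integrable[OF assms]
  by (simp add: power2_sum mult.assoc)

lemma integral_mult_le_sqrt_integral_square:
  fixes X Y :: "'a \<Rightarrow> real"
  assumes [measurable]: "X \<in> borel_measurable M" "Y \<in> borel_measurable M"
    and X2: "integrable M (\<lambda>x. (X x)\<^sup>2)" and Y2: "integrable M (\<lambda>x. (Y x)\<^sup>2)"
  shows "(\<integral>x. X x * Y x \<partial>M) \<le> sqrt (\<integral>x. (X x)\<^sup>2 \<partial>M) * sqrt (\<integral>x. (Y x)\<^sup>2 \<partial>M)"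
proof -
  define a where "a = (\<integral>x. (X x)\<^sup>2 \<partial>M)"
  define b where "b = (\<integral>x. (Y x)\<^sup>2 \<partial>M)"
  define c where "c = (\<integral>x. X x * Y x \<partial>M)"
  have XY: "integrable M (\<lambda>x. X x * Y x)"
    by (rule integrable_mult_of_square_integrable[OF assms])
  have "c\<^sup>2 \<le> a * b"
  proof (cases "a = 0")
    case True
    then have "AE x in M. (X x)\<^sup>2 = 0"
      using integral_nonneg_eq_0_iff_AE[OF X2] by (simp add: a_def)
    then have "AE x in M. X x * Y x = 0"
      by eventually_elim simp
    then have "c = 0"
      unfolding c_def by (simp add: integral_cong_AE[where g = "\<lambda>_. 0"])
    then show ?thesis using True by simp
  next
    case False
    moreover have "a \<ge> 0"
      unfolding a_def by simp
    ultimately have "a > 0"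
      by simp
    define t where "t = c / a"
    \<comment> \<open>\<open>t\<close> minimises the quadratic \<open>t \<mapsto> \<integral>(t X - Y)\<^sup>2 = a t\<^sup>2 - 2 c t + b\<close>\<close>
    have "0 \<le> (\<integral>x. (t * X x - Y x)\<^sup>2 \<partial>M)"
      by simp
    also have "\<dots> = t\<^sup>2 * a - 2 * t * c + b"
      using X2 Y2 XY
      by (simp add: a_def b_def c_def power2_diff power_mult_distrib mult.assoc)
    also have "\<dots> = b - c\<^sup>2 / a"
      using \<open>a > 0\<close> by (simp add: t_def field_simps power2_eq_square)
    finally show ?thesis
      using \<open>a > 0\<close> by (simp add: field_simps)
  qed
  then have "c \<le> sqrt (a * b)"
    using real_sqrt_le_mono[of "c\<^sup>2" "a * b"] by simp
  then show ?thesis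
    by (simp add: a_def b_def c_def real_sqrt_mult)
qed

lemma L2norm_add_le:
  fixes X Y :: "'a \<Rightarrow> real"
  assumes [measurable]: "X \<in> borel_measurable M" "Y \<in> borel_measurable M"
    and X2: "integrable M (\<lambda>x. (X x)\<^sup>2)" and Y2: "integrable M (\<lambda>x. (Y x)\<^sup>2)"
  shows "L2norm M (\<lambda>x. X x + Y x) \<le> L2norm M X + L2norm M Y"
proof -
  have a: "0 \<le> (\<integral>x. (X x)\<^sup>2 \<partial>M)" and b: "0 \<le> (\<integral>x. (Y x)\<^sup>2 \<partial>M)"
    by simp_all
  have "(\<integral>x. (X x + Y x)\<^sup>2 \<partial>M)
      = (\<integral>x. (X x)\<^sup>2 \<partial>M) + 2 * (\<integral>x. X x * Y x \<partial>M) + (\<integral>x. (Y x)\<^sup>2 \<partial>M)"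
    using X2 Y2 integrable_mult_of_square_integrable[OF assms]
    by (simp add: power2_sum mult.assoc)
  also have "\<dots> \<le> (L2norm M X + L2norm M Y)\<^sup>2"
    using integral_mult_le_sqrt_integral_square[OF assms] a b
    by (simp add: L2norm_def power2_sum)
  finally show ?thesis
    unfolding L2norm_def by (intro real_le_lsqrt) (auto simp: L2norm_def)
qed

lemma L2norm_cong_AE:
  assumes "AE x in M. X x = Y x" "X \<in> borel_measurable M" "Y \<in> borel_measurable M"
  shows "L2norm M X = L2norm M Y"
  unfolding L2norm_def using assms by (auto intro!: integral_cong_AE arg_cong[where f = sqrt])

lemma integrable_mult_bounded:
  fixes X Z :: "'a \<Rightarrow> real"
  assumes "integrable M X" "Z \<in> borel_measurable M" "AE x in M. \<bar>Z x\<bar> \<le> c"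
  shows "integrable M (\<lambda>x. Z x * X x)"
proof (rule Bochner_Integration.integrable_bound[of M "\<lambda>x. c * X x"])
  show "AE x in M. norm (Z x * X x) \<le> norm (c * X x)"
    using assms(3) by eventually_elim (auto simp: abs_mult intro!: mult_right_mono)
qed (use assms in \<open>auto intro: borel_measurable_integrable\<close>)

lemma (in finite_measure) subalgebra_sigma_finite:
  assumes "subalgebra M F"
  shows "sigma_finite_subalgebra M F"
  by (intro finite_measure_subalgebra_is_sigma_finite finite_measure_subalgebra.intro)
     (simp_all add: finite_measure_axioms finite_measure_subalgebra_axioms_def assms)

lemma (in sigma_finite_subalgebra) real_cond_exp_charact_Int_stable:
  assumes F: "sets F = sigma_sets (space M) E" "Int_stable E" "space M \<in> E"
    and eq: "\<And>A. A \<in> E \<Longrightarrow> (\<integral>x\<in>A. f x \<partial>M) = (\<integral>x\<in>A. g x \<partial>M)"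
    and f: "integrable M f" and g: "integrable M g" and [measurable]: "g \<in> borel_measurable F"
  shows "AE x in M. real_cond_exp M F f x = g x"
proof (rule real_cond_exp_charact)
  have F_M: "sigma_sets (space M) E \<subseteq> sets M"
    using F(1) subalg by (simp add: subalgebra_def)
  then have E_M: "E \<subseteq> Pow (space M)"
    using sets.sets_into_space by blast
  have set_int: "set_integrable M A h"
    if "A \<in> sigma_sets (space M) E" "integrable M h" for A and h :: "'a \<Rightarrow> real"
    unfolding set_integrable_def using that F_M by (intro integrable_mult_indicator) auto
  fix A assume "A \<in> sets F"
  then have "A \<in> sigma_sets (space M) E"
    using F(1) by simp
  with F(2) E_M show "(\<integral>x\<in>A. f x \<partial>M) = (\<integral>x\<in>A. g x \<partial>M)"
  proof (induction rule: sigma_sets_induct_disjoint)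
    case (compl A)
    have split: "(\<integral>x\<in>space M. h x \<partial>M) = (\<integral>x\<in>A. h x \<partial>M) + (\<integral>x\<in>space M - A. h x \<partial>M)"
      if "integrable M h" for h :: "'a \<Rightarrow> real"
    proof -
      have "space M = A \<union> (space M - A)"
        using compl(1) F_M sets.sets_into_space by blast
      then show ?thesis
        using set_integral_Un[of A "space M - A" M h] set_int compl(1) that
        by (metis Diff_disjoint sigma_sets.Compl)
    qed
    show ?case
      using split[of f] split[of g] eq[OF F(3)] compl(2) f g by simp
  next
    case (union A)
    have "(\<integral>x\<in>(\<Union>i. A i). h x \<partial>M) = (\<Sum>i. \<integral>x\<in>A i. h x \<partial>M)" if "integrable M h" for h :: "'a \<Rightarrow> real"
      using union(1,2) F_M that
      by (intro lebesgue_integral_countable_add set_int sigma_sets.Union)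
         (auto simp: disjoint_family_on_def subset_eq)
    then show ?case
      using union(3) f g by simp
  next
    case empty
    show ?case
      by (simp add: set_lebesgue_integral_def)
  qed (rule eq)
qed (use f g in simp_all)

context prob_space
begin

lemma integrable_square_real_cond_exp:
  fixes X :: "'a \<Rightarrow> real"
  assumes "subalgebra M F" "X \<in> borel_measurable M" "integrable M (\<lambda>x. (X x)\<^sup>2)"
  shows "integrable M (\<lambda>x. (real_cond_exp M F X x)\<^sup>2)"
proof -
  interpret sigma_finite_subalgebra M F
    by (rule subalgebra_sigma_finite) fact
  show ?thesis
    using assms convex_power2
    by (intro integrable_convex_cond_exp[of X UNIV]) (auto intro: square_integrable_imp_integrable)
qed

lemma L2norm_real_cond_exp_le:
  fixes X :: "'a \<Rightarrow> real"
  assumes "subalgebra M F" "X \<in> borel_measurable M" "integrable M (\<lambda>x. (X x)\<^sup>2)"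
  shows "L2norm M (real_cond_exp M F X) \<le> L2norm M X"
proof -
  interpret sigma_finite_subalgebra M F
    by (rule subalgebra_sigma_finite) fact
  have X: "integrable M X"
    using assms by (auto intro: square_integrable_imp_integrable)
  have "(\<integral>x. (real_cond_exp M F X x)\<^sup>2 \<partial>M) \<le> (\<integral>x. real_cond_exp M F (\<lambda>x. (X x)\<^sup>2) x \<partial>M)"
    using real_cond_exp_jensens_inequality(2)[where I = UNIV and q = "\<lambda>x. x\<^sup>2"] assms X convex_power2
    by (intro integral_mono_AE integrable_square_real_cond_exp real_cond_exp_int) auto
  also have "\<dots> = (\<integral>x. (X x)\<^sup>2 \<partial>M)"
    using assms by (intro real_cond_exp_int)
  finally show ?thesis
    unfolding L2norm_def by simp
qed

lemma L2norm_real_cond_exp_add_le: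
  fixes X Y :: "'a \<Rightarrow> real"
  assumes F: "subalgebra M F" and [measurable]: "X \<in> borel_measurable M" "Y \<in> borel_measurable M"
    and X2: "integrable M (\<lambda>x. (X x)\<^sup>2)" and Y2: "integrable M (\<lambda>x. (Y x)\<^sup>2)"
  shows "L2norm M (real_cond_exp M F (\<lambda>x. X x + Y x))
           \<le> L2norm M (real_cond_exp M F X) + L2norm M (real_cond_exp M F Y)"
proof -
  interpret sigma_finite_subalgebra M F
    by (rule subalgebra_sigma_finite) fact
  have "integrable M X" "integrable M Y"
    using X2 Y2 by (auto intro: square_integrable_imp_integrable)
  then have "L2norm M (real_cond_exp M F (\<lambda>x. X x + Y x))
           = L2norm M (\<lambda>x. real_cond_exp M F X x + real_cond_exp M F Y x)"
    by (intro L2norm_cong_AE real_cond_exp_add) auto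
  also have "\<dots> \<le> L2norm M (real_cond_exp M F X) + L2norm M (real_cond_exp M F Y)"
    using F X2 Y2 by (intro L2norm_add_le integrable_square_real_cond_exp) auto
  finally show ?thesis .
qed

lemma L2norm_real_cond_exp_mono:
  fixes X :: "'a \<Rightarrow> real"
  assumes G: "subalgebra M G" and F: "subalgebra G F"
    and [measurable]: "X \<in> borel_measurable M" and X2: "integrable M (\<lambda>x. (X x)\<^sup>2)"
  shows "L2norm M (real_cond_exp M F X) \<le> L2norm M (real_cond_exp M G X)"
proof -
  have FM: "subalgebra M F"
    using G F by (auto simp: subalgebra_def)
  interpret sigma_finite_subalgebra M F
    by (rule subalgebra_sigma_finite) fact
  have "integrable M X"
    using X2 by (auto intro: square_integrable_imp_integrable)
  then have "L2norm M (real_cond_exp M F X) = L2norm M (real_cond_exp M F (real_cond_exp M G X))"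
    using G F by (intro L2norm_cong_AE AE_symmetric[OF real_cond_exp_nested_subalg]) auto
  also have "\<dots> \<le> L2norm M (real_cond_exp M G X)"
    using FM G X2 by (intro L2norm_real_cond_exp_le integrable_square_real_cond_exp) auto
  finally show ?thesis .
qed

lemma real_cond_exp_indicator_bounded:
  assumes "subalgebra M F" "A \<in> sets M"
  shows "AE x in M. \<bar>real_cond_exp M F (indicator A) x\<bar> \<le> 1"
proof -
  interpret sigma_finite_subalgebra M F
    by (rule subalgebra_sigma_finite) fact
  have "AE x in M. 0 \<le> real_cond_exp M F (indicator A) x"
    using assms by (intro real_cond_exp_pos) auto
  moreover have "integrable M (indicator A :: 'a \<Rightarrow> real)"
    using assms by (simp add: emeasure_eq_measure)
  then have "AE x in M. real_cond_exp M F (indicator A) x \<le> 1"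
    by (intro real_cond_exp_le_c) (auto simp: indicator_def)
  ultimately show ?thesis
    by eventually_elim auto
qed

lemma real_cond_exp_comp:
  fixes \<phi> :: "'b \<Rightarrow> real"
  assumes U [measurable]: "U \<in> M \<rightarrow>\<^sub>M N" and G: "subalgebra N G" and F: "subalgebra M F"
    and sets_F: "sets F = {U -` D \<inter> space M | D. D \<in> sets G}"
    and \<phi>: "integrable (distr M N U) \<phi>"
  shows "AE x in M. real_cond_exp M F (\<lambda>x. \<phi> (U x)) x = real_cond_exp (distr M N U) G \<phi> (U x)"
proof -
  let ?Q = "distr M N U"
  interpret Q: sigma_finite_subalgebra ?Q G
    using G by (intro finite_measure.subalgebra_sigma_finite finite_measure_distr U)
      (simp add: subalgebra_def)
  interpret F: sigma_finite_subalgebra M F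
    by (rule subalgebra_sigma_finite) fact
  define \<psi> where "\<psi> = real_cond_exp ?Q G \<phi>"
  have \<psi>_G: "\<psi> \<in> borel_measurable G"
    unfolding \<psi>_def by simp
  have [measurable]: "\<psi> \<in> borel_measurable N"
    using G \<psi>_G by (rule measurable_from_subalg)
  have "integrable ?Q \<psi>"
    unfolding \<psi>_def using \<phi> by (rule Q.real_cond_exp_int)
  then have \<psi>_U: "integrable M (\<lambda>x. \<psi> (U x))"
    by (simp add: integrable_distr_eq)
  have [measurable]: "\<phi> \<in> borel_measurable N"
    using \<phi> by (simp add: borel_measurable_integrable)
  have "U \<in> F \<rightarrow>\<^sub>M G"
    using F G sets_F measurable_space[OF U] by (intro measurableI) (auto simp: subalgebra_def)
  then have \<psi>_U_F: "(\<lambda>x. \<psi> (U x)) \<in> borel_measurable F"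
    using \<psi>_G by (simp add: measurable_comp[of U F G \<psi>, unfolded comp_def])
  show ?thesis
    unfolding \<psi>_def[symmetric]
  proof (rule F.real_cond_exp_charact[OF _ _ \<psi>_U \<psi>_U_F])
    show "integrable M (\<lambda>x. \<phi> (U x))"
      using \<phi> by (simp add: integrable_distr_eq)
    fix A assume "A \<in> sets F"
    then obtain D where D: "D \<in> sets G" and A: "A = U -` D \<inter> space M"
      using sets_F by auto
    have [measurable]: "D \<in> sets N"
      using D G by (auto simp: subalgebra_def)
    have transfer: "(\<integral>x\<in>A. h (U x) \<partial>M) = (\<integral>y\<in>D. h y \<partial>?Q)" if [measurable]: "h \<in> borel_measurable N"
      for h :: "'b \<Rightarrow> real"
      unfolding A set_lebesgue_integral_def
      by (subst integral_distr) (auto intro!: Bochner_Integration.integral_cong simp: indicator_def)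
    have "(\<integral>x\<in>A. \<phi> (U x) \<partial>M) = (\<integral>y\<in>D. \<phi> y \<partial>?Q)"
      by (rule transfer) simp
    also have "\<dots> = (\<integral>y\<in>D. \<psi> y \<partial>?Q)"
      unfolding \<psi>_def using \<phi> D by (rule Q.real_cond_exp_intA)
    also have "\<dots> = (\<integral>x\<in>A. \<psi> (U x) \<partial>M)"
      by (rule transfer[symmetric]) simp
    finally show "(\<integral>x\<in>A. \<phi> (U x) \<partial>M) = (\<integral>x\<in>A. \<psi> (U x) \<partial>M)" .
  qed
qed

lemma L2norm_real_cond_exp_comp:
  fixes \<phi> :: "'b \<Rightarrow> real"
  assumes U: "U \<in> M \<rightarrow>\<^sub>M N" and G: "subalgebra N G" and F: "subalgebra M F"
    and sets_F: "sets F = {U -` D \<inter> space M | D. D \<in> sets G}"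
    and \<phi>: "integrable (distr M N U) \<phi>"
  shows "L2norm M (real_cond_exp M F (\<lambda>x. \<phi> (U x)))
       = L2norm (distr M N U) (real_cond_exp (distr M N U) G \<phi>)"
proof -
  have [measurable]: "real_cond_exp (distr M N U) G \<phi> \<in> borel_measurable N"
    using G by (rule measurable_from_subalg) simp
  have "L2norm M (real_cond_exp M F (\<lambda>x. \<phi> (U x)))
      = L2norm M (\<lambda>x. real_cond_exp (distr M N U) G \<phi> (U x))"
    using U by (intro L2norm_cong_AE real_cond_exp_comp[OF assms]) auto
  also have "\<dots> = L2norm (distr M N U) (real_cond_exp (distr M N U) G \<phi>)"
    unfolding L2norm_def using U by (subst integral_distr) auto
  finally show ?thesis .
qed

end

section \<open>Conditional independence\<close>

text \<open>For \<open>C \<subseteq> B\<close> this says that \<open>A\<close> and \<open>B\<close> are conditionally independent given \<open>C\<close>: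
  knowing \<open>B\<close> predicts the events of \<open>A\<close> no better than knowing \<open>C\<close>.\<close>

definition cond_indep :: "'a measure \<Rightarrow> 'a measure \<Rightarrow> 'a measure \<Rightarrow> 'a measure \<Rightarrow> bool" where
  "cond_indep M A B C \<longleftrightarrow>
     (\<forall>a\<in>sets A. AE x in M. real_cond_exp M B (indicator a) x = real_cond_exp M C (indicator a) x)"

lemma cond_indep_subalgebra:
  "cond_indep M A B C \<Longrightarrow> sets A' \<subseteq> sets A \<Longrightarrow> cond_indep M A' B C"
  unfolding cond_indep_def by blast

context prob_space
begin

lemma cond_indep_commute:
  assumes A: "subalgebra M A" and B: "subalgebra M B" and CA: "subalgebra A C" and CB: "subalgebra B C"
    and indep: "cond_indep M A B C"
  shows "cond_indep M B A C"
  unfolding cond_indep_def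
proof
  have C: "subalgebra M C"
    using A CA by (auto simp: subalgebra_def)
  interpret A: sigma_finite_subalgebra M A by (rule subalgebra_sigma_finite) fact
  interpret B: sigma_finite_subalgebra M B by (rule subalgebra_sigma_finite) fact
  interpret C: sigma_finite_subalgebra M C by (rule subalgebra_sigma_finite) fact
  fix b assume b: "b \<in> sets B"
  then have [measurable]: "b \<in> sets M"
    using B by (auto simp: subalgebra_def)
  define eb where "eb = real_cond_exp M C (indicator b)"
  have eb: "integrable M eb" "eb \<in> borel_measurable C"
    unfolding eb_def by (auto simp: emeasure_eq_measure)
  show "AE x in M. real_cond_exp M A (indicator b) x = real_cond_exp M C (indicator b) x"
    unfolding eb_def[symmetric]
  proof (rule A.real_cond_exp_charact)
    fix a assume a: "a \<in> sets A"
    then have [measurable]: "a \<in> sets M"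
      using A by (auto simp: subalgebra_def)
    define ea where "ea = real_cond_exp M C (indicator a)"
    have ea: "integrable M ea" "ea \<in> borel_measurable C"
      unfolding ea_def by (auto simp: emeasure_eq_measure)
    have "(\<integral>x\<in>a. (indicator b x :: real) \<partial>M) = (\<integral>x. indicator b x * indicator a x \<partial>M)"
      by (simp add: set_lebesgue_integral_def mult.commute)
    also have "\<dots> = (\<integral>x. indicator b x * real_cond_exp M B (indicator a) x \<partial>M)"
      using b
      by (intro B.real_cond_exp_intg(2)[symmetric] integrable_real_mult_indicator)
         (auto simp: emeasure_eq_measure)
    also have "\<dots> = (\<integral>x. indicator b x * ea x \<partial>M)"
      using indep a unfolding cond_indep_def ea_def by (intro integral_cong_AE) auto
    also have "\<dots> = (\<integral>x. ea x * eb x \<partial>M)"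
      unfolding eb_def using ea
      by (subst C.real_cond_exp_intg(2)) (auto simp: mult.commute intro: integrable_real_mult_indicator)
    also have "\<dots> = (\<integral>x. eb x * indicator a x \<partial>M)"
      unfolding ea_def using eb
      by (subst mult.commute, subst C.real_cond_exp_intg(2)) (auto intro: integrable_real_mult_indicator)
    finally show "(\<integral>x\<in>a. indicator b x \<partial>M) = (\<integral>x\<in>a. eb x \<partial>M)"
      by (simp add: set_lebesgue_integral_def mult.commute)
  qed (use eb CA in \<open>auto simp: emeasure_eq_measure intro: measurable_from_subalg\<close>)
qed

lemma real_cond_exp_cond_indep:
  assumes indep: "cond_indep M A B C"
    and A: "subalgebra M A" and B: "subalgebra M B" and HB: "subalgebra B H" and CH: "subalgebra H C"
    and D: "subalgebra M D"
    and sets_D: "sets D = sigma_sets (space M) {a \<inter> h | a h. a \<in> sets A \<and> h \<in> sets H}"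
    and T: "integrable M T" and T_B [measurable]: "T \<in> borel_measurable B"
  shows "AE x in M. real_cond_exp M D T x = real_cond_exp M H T x"
proof -
  have H: "subalgebra M H" and C: "subalgebra M C"
    using B HB CH by (auto simp: subalgebra_def)
  interpret D: sigma_finite_subalgebra M D by (rule subalgebra_sigma_finite) fact
  interpret B: sigma_finite_subalgebra M B by (rule subalgebra_sigma_finite) fact
  interpret H: sigma_finite_subalgebra M H by (rule subalgebra_sigma_finite) fact
  define W where "W = real_cond_exp M H T"
  have W: "integrable M W" "W \<in> borel_measurable H"
    unfolding W_def using T by auto
  have space_A: "space A = space M" and space_H: "space H = space M"
    using A H by (auto simp: subalgebra_def)
  have "sets H \<subseteq> sets D"
  proof
    fix h assume "h \<in> sets H"
    then have "space M \<inter> h \<in> {a \<inter> h | a h. a \<in> sets A \<and> h \<in> sets H}"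
      using sets.top[of A] space_A by blast
    then show "h \<in> sets D"
      unfolding sets_D using sets.sets_into_space[of h H] \<open>h \<in> sets H\<close> space_H
      by (metis (no_types, lifting) Int_absorb1 sigma_sets.Basic)
  qed
  then have "subalgebra D H"
    using D H by (auto simp: subalgebra_def)
  then have W_D: "W \<in> borel_measurable D"
    using W(2) by (rule measurable_from_subalg)
  show ?thesis
    unfolding W_def[symmetric]
  proof (rule D.real_cond_exp_charact_Int_stable[OF sets_D _ _ _ T W(1) W_D])
    show "Int_stable {a \<inter> h | a h. a \<in> sets A \<and> h \<in> sets H}"
      unfolding Int_stable_def
      by clarify (metis (no_types, lifting) Int_assoc Int_left_commute sets.Int)
    show "space M \<in> {a \<inter> h | a h. a \<in> sets A \<and> h \<in> sets H}"
      using sets.top[of A] sets.top[of H] space_A space_H by blast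
    fix g assume "g \<in> {a \<inter> h | a h. a \<in> sets A \<and> h \<in> sets H}"
    then obtain a h where g: "g = a \<inter> h" and a: "a \<in> sets A" and h: "h \<in> sets H"
      by blast
    have [measurable]: "a \<in> sets M" "h \<in> sets M" "h \<in> sets B" "h \<in> sets H"
      using a h A H HB by (auto simp: subalgebra_def)
    have [measurable]: "T \<in> borel_measurable M" "W \<in> borel_measurable M" "W \<in> borel_measurable B"
      using T W HB measurable_from_subalg by auto
    define ea where "ea = real_cond_exp M C (indicator a)"
    have ea_H [measurable]: "ea \<in> borel_measurable H"
      unfolding ea_def using CH by (rule measurable_from_subalg) simp
    have [measurable]: "ea \<in> borel_measurable M"
      unfolding ea_def by simp
    have ea_bounded: "AE x in M. \<bar>ea x * indicator h x\<bar> \<le> 1"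
      using real_cond_exp_indicator_bounded[OF C \<open>a \<in> sets M\<close>]
      unfolding ea_def by eventually_elim (auto simp: indicator_def)
    have ea_cond_indep: "AE x in M. real_cond_exp M B (indicator a) x = ea x"
      using indep a unfolding cond_indep_def ea_def by blast
    have "(\<integral>x\<in>g. T x \<partial>M) = (\<integral>x. (T x * indicator h x) * indicator a x \<partial>M)"
      unfolding g set_lebesgue_integral_def by (simp add: indicator_inter_arith mult_ac)
    also have "\<dots> = (\<integral>x. (T x * indicator h x) * real_cond_exp M B (indicator a) x \<partial>M)"
      using T by (intro B.real_cond_exp_intg(2)[symmetric] integrable_real_mult_indicator) auto
    also have "\<dots> = (\<integral>x. (ea x * indicator h x) * T x \<partial>M)"
      using ea_cond_indep by (intro integral_cong_AE) (auto simp: mult_ac)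
    also have "\<dots> = (\<integral>x. (ea x * indicator h x) * W x \<partial>M)"
      unfolding W_def using T ea_bounded
      by (intro H.real_cond_exp_intg(2)[symmetric] integrable_mult_bounded) auto
    also have "\<dots> = (\<integral>x. (W x * indicator h x) * real_cond_exp M B (indicator a) x \<partial>M)"
      using ea_cond_indep by (intro integral_cong_AE) (auto simp: mult_ac)
    also have "\<dots> = (\<integral>x. (W x * indicator h x) * indicator a x \<partial>M)"
      using W by (intro B.real_cond_exp_intg(2) integrable_real_mult_indicator) auto
    also have "\<dots> = (\<integral>x\<in>g. W x \<partial>M)"
      unfolding g set_lebesgue_integral_def by (simp add: indicator_inter_arith mult_ac)
    finally show "(\<integral>x\<in>g. T x \<partial>M) = (\<integral>x\<in>g. W x \<partial>M)" .
  qed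
qed

end

section \<open>Sigma-algebras generated by a process\<close>

lemma space_gen_sigma [simp]: "space (gen_sigma M S xi K) = space M"
  unfolding gen_sigma_def by (simp add: space_measure_of_conv)

lemma sets_gen_sigma:
  "sets (gen_sigma M S xi K) = sigma_sets (space M) (\<Union>k\<in>K. {xi k -` A \<inter> space M | A. A \<in> sets S})"
  unfolding gen_sigma_def by (rule sets_measure_of) auto

lemma vimage_in_sets_gen_sigma:
  "k \<in> K \<Longrightarrow> A \<in> sets S \<Longrightarrow> xi k -` A \<inter> space M \<in> sets (gen_sigma M S xi K)"
  unfolding sets_gen_sigma by (rule sigma_sets.Basic) blast

lemma sets_gen_sigma_mono:
  "K \<subseteq> L \<Longrightarrow> sets (gen_sigma M S xi K) \<subseteq> sets (gen_sigma M S xi L)"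
  unfolding sets_gen_sigma by (rule sigma_sets_subseteq) blast

lemma subalgebra_gen_sigma_mono:
  "K \<subseteq> L \<Longrightarrow> subalgebra (gen_sigma M S xi L) (gen_sigma M S xi K)"
  by (simp add: subalgebra_def sets_gen_sigma_mono)

lemma subalgebra_gen_sigma:
  assumes "\<And>k. k \<in> K \<Longrightarrow> xi k \<in> M \<rightarrow>\<^sub>M S"
  shows "subalgebra M (gen_sigma M S xi K)"
  unfolding subalgebra_def sets_gen_sigma using assms
  by (auto intro!: sets.sigma_sets_subset measurable_sets)

lemma measurable_gen_sigma:
  "xi k \<in> M \<rightarrow>\<^sub>M S \<Longrightarrow> k \<in> K \<Longrightarrow> xi k \<in> gen_sigma M S xi K \<rightarrow>\<^sub>M S"
  by (rule measurableI) (auto simp: vimage_in_sets_gen_sigma measurable_space)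

lemma sets_gen_sigma_singleton:
  assumes "xi k \<in> M \<rightarrow>\<^sub>M S"
  shows "sets (gen_sigma M S xi {k}) = {xi k -` A \<inter> space M | A. A \<in> sets S}"
proof -
  have "{xi k -` A \<inter> space M | A. A \<in> sigma_sets (space S) (sets S)}
      = sigma_sets (space M) {xi k -` A \<inter> space M | A. A \<in> sets S}"
    using measurable_space[OF assms] by (intro sigma_sets_vimage_commute) auto
  then show ?thesis
    by (simp add: sets_gen_sigma sets.sigma_sets_eq)
qed

lemma sets_gen_sigma_Un:
  "sets (gen_sigma M S xi (K \<union> L)) = sigma_sets (space M)
     {a \<inter> b | a b. a \<in> sets (gen_sigma M S xi K) \<and> b \<in> sets (gen_sigma M S xi L)}"
  (is "_ = sigma_sets _ ?E")
proof
  have "?E \<subseteq> sets (gen_sigma M S xi (K \<union> L))"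
    using sets_gen_sigma_mono[of K "K \<union> L"] sets_gen_sigma_mono[of L "K \<union> L"] by blast
  then show "sigma_sets (space M) ?E \<subseteq> sets (gen_sigma M S xi (K \<union> L))"
    using sets.sigma_sets_subset[of ?E "gen_sigma M S xi (K \<union> L)"] by simp
next
  have generator_E: "xi k -` A \<inter> space M \<in> ?E" if "k \<in> K \<union> L" "A \<in> sets S" for k A
  proof (cases "k \<in> K")
    case True
    then show ?thesis
      using that vimage_in_sets_gen_sigma sets.top[of "gen_sigma M S xi L"]
      by (intro CollectI exI[of _ "xi k -` A \<inter> space M"] exI[of _ "space M"]) auto
  next
    case False
    then show ?thesis
      using that vimage_in_sets_gen_sigma sets.top[of "gen_sigma M S xi K"]
      by (intro CollectI exI[of _ "space M"] exI[of _ "xi k -` A \<inter> space M"]) auto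
  qed
  then show "sets (gen_sigma M S xi (K \<union> L)) \<subseteq> sigma_sets (space M) ?E"
    unfolding sets_gen_sigma[of _ _ _ "K \<union> L"] by (intro sigma_sets_subseteq) (use generator_E in blast)
qed

lemma sets_gen_sigma_vimage:
  assumes U: "U \<in> M \<rightarrow>\<^sub>M N"
    and xi_eta: "\<And>k \<omega>. k \<in> K \<Longrightarrow> \<omega> \<in> space M \<Longrightarrow> xi (g k) \<omega> = eta k (U \<omega>)"
  shows "sets (gen_sigma M S xi (g ` K)) = {U -` D \<inter> space M | D. D \<in> sets (gen_sigma N S eta K)}"
proof -
  let ?E = "\<Union>k\<in>K. {eta k -` A \<inter> space N | A. A \<in> sets S}"
  have vimage_eq: "U -` (eta k -` A \<inter> space N) \<inter> space M = xi (g k) -` A \<inter> space M" if "k \<in> K" for k A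
    using measurable_space[OF U] xi_eta[OF that] by auto
  have "{U -` D \<inter> space M | D. D \<in> ?E}
      = (\<Union>k\<in>K. {U -` (eta k -` A \<inter> space N) \<inter> space M | A. A \<in> sets S})"
    by blast
  also have "\<dots> = (\<Union>k\<in>g ` K. {xi k -` A \<inter> space M | A. A \<in> sets S})"
    using vimage_eq by simp
  finally have generators: "{U -` D \<inter> space M | D. D \<in> ?E}
      = (\<Union>k\<in>g ` K. {xi k -` A \<inter> space M | A. A \<in> sets S})" .
  have "{U -` D \<inter> space M | D. D \<in> sigma_sets (space N) ?E}
      = sigma_sets (space M) {U -` D \<inter> space M | D. D \<in> ?E}"
    using measurable_space[OF U] by (intro sigma_sets_vimage_commute) auto
  then show ?thesis
    unfolding sets_gen_sigma by (simp only: generators)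
qed

section \<open>Stationary Markov chains\<close>

locale stat_markov_chain =
  fixes M :: "'a measure" and S :: "'s measure" and xi :: "int \<Rightarrow> 'a \<Rightarrow> 's"
  assumes stationary_markov_chain: "stationary_markov_chain M S xi"
begin

sublocale prob_space M
  using stationary_markov_chain by (simp add: stationary_markov_chain_def)

lemma measurable_xi [measurable]: "xi k \<in> M \<rightarrow>\<^sub>M S"
  using stationary_markov_chain by (simp add: stationary_markov_chain_def)

abbreviation \<F> :: "int set \<Rightarrow> 'a measure" where
  "\<F> K \<equiv> gen_sigma M S xi K"

lemma subalgebra_\<F>: "subalgebra M (\<F> K)"
  by (rule subalgebra_gen_sigma) simp

lemma markov_cond_indep: "cond_indep M (\<F> {n + 1}) (\<F> {..n}) (\<F> {n})"
  using stationary_markov_chain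
  unfolding cond_indep_def sets_gen_sigma_singleton[OF measurable_xi]
  by (auto simp: stationary_markov_chain_def markov_process_def)

text \<open>Each induction step appends \<open>xi (n + k + 1)\<close>, which by the Markov property is conditionally
  independent of the past given \<open>xi (n + k)\<close>.\<close>

lemma cond_indep_past_future: "cond_indep M (\<F> {..n}) (\<F> {n..n + int k}) (\<F> {n})"
proof (induction k)
  case 0
  then show ?case
    by (simp add: cond_indep_def)
next
  case (Suc k)
  have step: "{n..n + int (Suc k)} = {n + int k + 1} \<union> {n..n + int k}"
    by auto
  show ?case
    unfolding cond_indep_def
  proof
    fix a assume a: "a \<in> sets (\<F> {..n})"
    then have a_past: "a \<in> sets (\<F> {..n + int k})"
      using sets_gen_sigma_mono[of "{..n}" "{..n + int k}"] by auto
    then have [measurable]: "a \<in> sets M"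
      using subalgebra_\<F> by (auto simp: subalgebra_def)
    have "AE x in M. real_cond_exp M (\<F> {n..n + int (Suc k)}) (indicator a) x
                   = real_cond_exp M (\<F> {n..n + int k}) (indicator a) x"
      unfolding step
    proof (rule real_cond_exp_cond_indep[OF markov_cond_indep[of "n + int k"]
          subalgebra_\<F> subalgebra_\<F>])
      show "subalgebra (\<F> {..n + int k}) (\<F> {n..n + int k})"
        by (rule subalgebra_gen_sigma_mono) auto
      show "subalgebra (\<F> {n..n + int k}) (\<F> {n + int k})"
        by (rule subalgebra_gen_sigma_mono) auto
      show "subalgebra M (\<F> ({n + int k + 1} \<union> {n..n + int k}))"
        by (rule subalgebra_\<F>)
      show "sets (\<F> ({n + int k + 1} \<union> {n..n + int k})) = sigma_sets (space M)
              {a \<inter> h | a h. a \<in> sets (\<F> {n + int k + 1}) \<and> h \<in> sets (\<F> {n..n + int k})}"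
        by (rule sets_gen_sigma_Un)
      show "integrable M (indicator a :: 'a \<Rightarrow> real)"
        by (simp add: emeasure_eq_measure)
      show "(indicator a :: 'a \<Rightarrow> real) \<in> borel_measurable (\<F> {..n + int k})"
        using a_past by simp
    qed
    moreover have "AE x in M. real_cond_exp M (\<F> {n..n + int k}) (indicator a) x
                            = real_cond_exp M (\<F> {n}) (indicator a) x"
      using Suc a by (simp add: cond_indep_def)
    ultimately show "AE x in M. real_cond_exp M (\<F> {n..n + int (Suc k)}) (indicator a) x
                              = real_cond_exp M (\<F> {n}) (indicator a) x"
      by eventually_elim simp
  qed
qed

lemma cond_indep_future_past: "cond_indep M (\<F> {n..n + int k}) (\<F> {..n}) (\<F> {n})"
  by (rule cond_indep_commute[OF subalgebra_\<F> subalgebra_\<F> _ _ cond_indep_past_future])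
     (auto intro: subalgebra_gen_sigma_mono)

lemma L2norm_cond_exp_le_of_cond_indep:
  assumes indep: "cond_indep M (\<F> K) (\<F> L) (\<F> {n})" and "n \<in> J" "J \<subseteq> L" "I \<subseteq> K \<union> J"
    and X: "X \<in> borel_measurable (\<F> L)" "integrable M (\<lambda>x. (X x)\<^sup>2)"
  shows "L2norm M (real_cond_exp M (\<F> I) X) \<le> L2norm M (real_cond_exp M (\<F> J) X)"
proof -
  have [measurable]: "X \<in> borel_measurable M"
    using subalgebra_\<F> X(1) by (rule measurable_from_subalg)
  have "integrable M X"
    using X(2) by (auto intro: square_integrable_imp_integrable)
  have "L2norm M (real_cond_exp M (\<F> I) X) \<le> L2norm M (real_cond_exp M (\<F> (K \<union> J)) X)"
    using assms by (intro L2norm_real_cond_exp_mono subalgebra_\<F> subalgebra_gen_sigma_mono) auto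
  also have "\<dots> = L2norm M (real_cond_exp M (\<F> J) X)"
    using assms \<open>integrable M X\<close>
    by (intro L2norm_cong_AE real_cond_exp_cond_indep[OF indep] subalgebra_\<F> subalgebra_gen_sigma_mono
        sets_gen_sigma_Un) auto
  finally show ?thesis .
qed

definition path :: "nat \<Rightarrow> nat \<Rightarrow> 'a \<Rightarrow> int \<Rightarrow> 's" where
  "path m s \<omega> = (\<lambda>j\<in>{0..int m}. xi (j + int s) \<omega>)"

lemma measurable_path [measurable]: "path m s \<in> M \<rightarrow>\<^sub>M Pi\<^sub>M {0..int m} (\<lambda>_. S)"
  unfolding path_def[abs_def] by measurable

lemma distr_path:
  "distr M (Pi\<^sub>M {0..int m} (\<lambda>_. S)) (path m s) = distr M (Pi\<^sub>M {0..int m} (\<lambda>_. S)) (path m 0)"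
  using stationary_markov_chain
  unfolding stationary_markov_chain_def stationary_process_def path_def[abs_def] by simp

lemma distr_xi: "distr M S (xi (int s)) = distr M S (xi 0)"
proof -
  have "(\<lambda>x. x 0) \<in> Pi\<^sub>M {0..int 0} (\<lambda>_. S) \<rightarrow>\<^sub>M S"
    by (rule measurable_component_singleton) simp
  then have "distr M S (xi (int s))
      = distr (distr M (Pi\<^sub>M {0..int 0} (\<lambda>_. S)) (path 0 s)) S (\<lambda>x. x 0)" for s
    by (subst distr_distr[OF _ measurable_path]) (auto simp: comp_def path_def intro!: distr_cong)
  from this[of s] this[of 0] show ?thesis
    by (simp only: distr_path[of 0 s]) simp
qed

lemma L2norm_cond_exp_path_shift:
  assumes J: "J \<subseteq> {0..int m}" and \<phi>: "integrable (distr M (Pi\<^sub>M {0..int m} (\<lambda>_. S)) (path m 0)) \<phi>"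
  shows "L2norm M (real_cond_exp M (\<F> ((\<lambda>j. j + int s) ` J)) (\<lambda>\<omega>. \<phi> (path m s \<omega>)))
       = L2norm M (real_cond_exp M (\<F> J) (\<lambda>\<omega>. \<phi> (path m 0 \<omega>)))"
proof -
  let ?N = "Pi\<^sub>M {0..int m} (\<lambda>_. S)"
  let ?G = "gen_sigma ?N S (\<lambda>j x. x j) J"
  have G: "subalgebra ?N ?G"
    using J by (intro subalgebra_gen_sigma) auto
  have sets_shift: "sets (\<F> ((\<lambda>j. j + int s) ` J)) = {path m s -` D \<inter> space M | D. D \<in> sets ?G}" for s
    using J by (intro sets_gen_sigma_vimage[OF measurable_path]) (auto simp: path_def)
  \<comment> \<open>both norms are computed on the path space, where only the law of the path enters\<close>
  have \<phi>_s: "integrable (distr M ?N (path m s)) \<phi>" for s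
    using \<phi> by (simp only: distr_path[of m s])
  have "L2norm M (real_cond_exp M (\<F> ((\<lambda>j. j + int s) ` J)) (\<lambda>\<omega>. \<phi> (path m s \<omega>)))
      = L2norm (distr M ?N (path m s)) (real_cond_exp (distr M ?N (path m s)) ?G \<phi>)" for s
    by (rule L2norm_real_cond_exp_comp[OF measurable_path G subalgebra_\<F> sets_shift \<phi>_s])
  from this[of s] this[of 0] show ?thesis
    by (simp add: distr_path[of m s])
qed

end

locale stat_markov_chain_sum = stat_markov_chain M S xi
  for M :: "'a measure" and S :: "'s measure" and xi :: "int \<Rightarrow> 'a \<Rightarrow> 's" +
  fixes f :: "'s \<Rightarrow> real"
  assumes f_L2_0: "f \<in> L2_0 (distr M S (xi 0))" \<comment> \<open>only the square integrability is used\<close>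
begin

lemma measurable_f [measurable]: "f \<in> borel_measurable S"
  using f_L2_0 by (simp add: L2_0_def)

lemma integrable_square_f_xi: "integrable M (\<lambda>\<omega>. (f (xi (int i) \<omega>))\<^sup>2)"
proof -
  have "integrable (distr M S (xi (int i))) (\<lambda>x. (f x)\<^sup>2)"
    using f_L2_0 by (simp add: L2_0_def distr_xi)
  then show ?thesis
    by (simp add: integrable_distr_eq)
qed

definition block_sum :: "nat \<Rightarrow> nat \<Rightarrow> 'a \<Rightarrow> real" where
  "block_sum s m \<omega> = (\<Sum>i\<in>{1..m}. f (xi (int i + int s) \<omega>))"

lemma block_sum_add: "block_sum s (n + m) \<omega> = block_sum s n \<omega> + block_sum (s + n) m \<omega>"
proof -
  define g where "g i = f (xi (int i + int s) \<omega>)" for i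
  have "block_sum s (n + m) \<omega> = sum g {1..n} + sum g {n + 1..n + m}"
    unfolding block_sum_def g_def by (rule sum.ub_add_nat) simp
  also have "sum g {n + 1..n + m} = sum (\<lambda>i. g (i + n)) {1..m}"
    using sum.shift_bounds_cl_nat_ivl[of g 1 n m] by (simp add: add.commute)
  finally show ?thesis
    by (simp add: block_sum_def g_def add_ac)
qed

lemma measurable_block_sum_\<F>:
  "{int s + 1..int s + int m} \<subseteq> K \<Longrightarrow> block_sum s m \<in> borel_measurable (\<F> K)"
  unfolding block_sum_def[abs_def]
  by (intro borel_measurable_sum
      measurable_compose[OF measurable_gen_sigma[OF measurable_xi] measurable_f]) auto

lemma measurable_block_sum [measurable]: "block_sum s m \<in> borel_measurable M"
  unfolding block_sum_def[abs_def] by measurable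

lemma integrable_square_block_sum: "integrable M (\<lambda>\<omega>. (block_sum s m \<omega>)\<^sup>2)"
proof (induction m)
  case 0
  then show ?case
    by (simp add: block_sum_def)
next
  case (Suc m)
  have "block_sum s (Suc m) = (\<lambda>\<omega>. block_sum s m \<omega> + f (xi (int (Suc m + s)) \<omega>))"
    by (simp add: block_sum_def[abs_def] add_ac)
  then show ?case
    using integrable_square_add[OF measurable_block_sum
        measurable_compose[OF measurable_xi measurable_f] Suc.IH integrable_square_f_xi[of "Suc m + s"]]
    by simp
qed

abbreviation cond_L2norm :: "int set \<Rightarrow> ('a \<Rightarrow> real) \<Rightarrow> real" where
  "cond_L2norm K X \<equiv> L2norm M (real_cond_exp M (\<F> K) X)"

lemma cond_L2norm_block_sum_shift:
  assumes "J \<subseteq> {0..int m}"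
  shows "cond_L2norm ((\<lambda>j. j + int s) ` J) (block_sum s m) = cond_L2norm J (block_sum 0 m)"
proof -
  let ?N = "Pi\<^sub>M {0..int m} (\<lambda>_. S)"
  define \<phi> where "\<phi> x = (\<Sum>i\<in>{1..m}. f (x (int i)))" for x :: "int \<Rightarrow> 's"
  have [measurable]: "\<phi> \<in> borel_measurable ?N"
    unfolding \<phi>_def[abs_def]
  proof (rule borel_measurable_sum)
    fix i assume "i \<in> {1..m}"
    then have "int i \<in> {0..int m}"
      by auto
    then show "(\<lambda>x. f (x (int i))) \<in> borel_measurable ?N"
      by measurable
  qed
  have block_sum_path: "block_sum s m = (\<lambda>\<omega>. \<phi> (path m s \<omega>))" for s
    unfolding block_sum_def[abs_def] \<phi>_def path_def by (intro ext sum.cong) auto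
  have "integrable M (block_sum 0 m)"
    by (rule square_integrable_imp_integrable[OF measurable_block_sum integrable_square_block_sum])
  then have "integrable (distr M ?N (path m 0)) \<phi>"
    unfolding block_sum_path by (subst integrable_distr_eq) auto
  then show ?thesis
    unfolding block_sum_path by (rule L2norm_cond_exp_path_shift[OF assms])
qed

lemma cond_L2norm_block_sum_add_le:
  "cond_L2norm K (block_sum 0 (n + m)) \<le> cond_L2norm K (block_sum 0 n) + cond_L2norm K (block_sum n m)"
proof -
  have "block_sum 0 (n + m) = (\<lambda>\<omega>. block_sum 0 n \<omega> + block_sum n m \<omega>)"
    using block_sum_add[of 0 n m] by auto
  then show ?thesis
    using L2norm_real_cond_exp_add_le[OF subalgebra_\<F> measurable_block_sum measurable_block_sum
        integrable_square_block_sum integrable_square_block_sum]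
    by simp
qed

lemma cond_L2norm_start_subadditive:
  "cond_L2norm {0} (block_sum 0 (n + m))
     \<le> cond_L2norm {0} (block_sum 0 n) + cond_L2norm {0} (block_sum 0 m)"
proof -
  have "cond_indep M (\<F> {0}) (\<F> {int n..int n + int m}) (\<F> {int n})"
    by (rule cond_indep_subalgebra[OF cond_indep_past_future sets_gen_sigma_mono]) auto
  then have "cond_L2norm {0} (block_sum n m) \<le> cond_L2norm {int n} (block_sum n m)"
    by (rule L2norm_cond_exp_le_of_cond_indep[OF _ _ _ _ measurable_block_sum_\<F>
          integrable_square_block_sum]) auto
  also have "\<dots> = cond_L2norm {0} (block_sum 0 m)"
    using cond_L2norm_block_sum_shift[of "{0}" m n] by simp
  finally show ?thesis
    using cond_L2norm_block_sum_add_le[of "{0}" n m] by linarith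
qed

lemma cond_L2norm_end_subadditive:
  "cond_L2norm {int (n + m)} (block_sum 0 (n + m))
     \<le> cond_L2norm {int n} (block_sum 0 n) + cond_L2norm {int m} (block_sum 0 m)"
proof -
  have "cond_indep M (\<F> {int (n + m)}) (\<F> {..int n}) (\<F> {int n})"
    by (rule cond_indep_subalgebra[OF cond_indep_future_past sets_gen_sigma_mono]) auto
  then have "cond_L2norm {int (n + m)} (block_sum 0 n) \<le> cond_L2norm {int n} (block_sum 0 n)"
    by (rule L2norm_cond_exp_le_of_cond_indep[OF _ _ _ _ measurable_block_sum_\<F>
          integrable_square_block_sum]) auto
  moreover have "cond_L2norm {int (n + m)} (block_sum n m) = cond_L2norm {int m} (block_sum 0 m)"
    using cond_L2norm_block_sum_shift[of "{int m}" m n] by (simp add: add.commute)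
  ultimately show ?thesis
    using cond_L2norm_block_sum_add_le[of "{int (n + m)}" n m] by linarith
qed

lemma cond_L2norm_endpoints_subadditive:
  "cond_L2norm {0, int (n + m)} (block_sum 0 (n + m))
     \<le> cond_L2norm {0, int n} (block_sum 0 n) + cond_L2norm {0, int m} (block_sum 0 m)"
proof -
  have indep_past: "cond_indep M (\<F> {int (n + m)}) (\<F> {..int n}) (\<F> {int n})"
    by (rule cond_indep_subalgebra[OF cond_indep_future_past sets_gen_sigma_mono]) auto
  have indep_future: "cond_indep M (\<F> {0}) (\<F> {int n..int n + int m}) (\<F> {int n})"
    by (rule cond_indep_subalgebra[OF cond_indep_past_future sets_gen_sigma_mono]) auto
  have "cond_L2norm {0, int (n + m)} (block_sum 0 n) \<le> cond_L2norm {0, int n} (block_sum 0 n)"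
    by (rule L2norm_cond_exp_le_of_cond_indep[OF indep_past _ _ _ measurable_block_sum_\<F>
          integrable_square_block_sum]) auto
  moreover have "cond_L2norm {0, int (n + m)} (block_sum n m)
                   \<le> cond_L2norm {int n, int (n + m)} (block_sum n m)"
    by (rule L2norm_cond_exp_le_of_cond_indep[OF indep_future _ _ _ measurable_block_sum_\<F>
          integrable_square_block_sum]) auto
  moreover have "cond_L2norm {int n, int (n + m)} (block_sum n m)
                   = cond_L2norm {0, int m} (block_sum 0 m)"
    using cond_L2norm_block_sum_shift[of "{0, int m}" m n] by (simp add: add.commute)
  ultimately show ?thesis
    using cond_L2norm_block_sum_add_le[of "{0, int (n + m)}" n m] by linarith
qed

end

theorem lemma2:
  fixes M :: "'a measure" and S :: "'s measure" and xi :: "int \<Rightarrow> 'a \<Rightarrow> 's" and f :: "'s \<Rightarrow> real"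
  assumes "stationary_markov_chain M S xi"
    and "f \<in> L2_0 (distr M S (xi 0))"
  defines "Sn \<equiv> (\<lambda>(n::nat) \<omega>. \<Sum>i\<in>{1..n}. f (xi (int i) \<omega>))"
  shows "(\<forall>n m. L2norm M (real_cond_exp M (gen_sigma M S xi {0}) (Sn (n + m)))
              \<le> L2norm M (real_cond_exp M (gen_sigma M S xi {0}) (Sn n))
               + L2norm M (real_cond_exp M (gen_sigma M S xi {0}) (Sn m))) \<and>
         (\<forall>n m. L2norm M (real_cond_exp M (gen_sigma M S xi {int (n + m)}) (Sn (n + m)))
              \<le> L2norm M (real_cond_exp M (gen_sigma M S xi {int n}) (Sn n))
               + L2norm M (real_cond_exp M (gen_sigma M S xi {int m}) (Sn m))) \<and>
         (\<forall>n m. L2norm M (real_cond_exp M (gen_sigma M S xi {0, int (n + m)}) (Sn (n + m)))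
              \<le> L2norm M (real_cond_exp M (gen_sigma M S xi {0, int n}) (Sn n))
               + L2norm M (real_cond_exp M (gen_sigma M S xi {0, int m}) (Sn m)))"
proof -
  interpret stat_markov_chain_sum M S xi f
    using assms(1,2) by unfold_locales
  have "Sn = block_sum 0"
    unfolding Sn_def by (simp add: block_sum_def[abs_def])
  then show ?thesis
    using cond_L2norm_start_subadditive cond_L2norm_end_subadditive cond_L2norm_endpoints_subadditive
    by simp
qed

end
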